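(* In the blockchain implementation of non-fungible tokens described below, replace the ownership transaction $TxO$ by the royalty-paying transaction $TxOr$. Then the resulting implementation still satisfies the NFT specification $\mathcal N$: for every agent $a$, asset $\alpha$ and time $t$ with $Owns(a,\alpha,t)$, one has $PC(Agent, \tau(Owns(a,\alpha,t)))$, and $Owns$ satisfies the ownership laws (L1)–(L3).
   Context: Agents form a type $Agent$, assets a type $Asset$; time $\mathbb T$ is isomorphic to the natural numbers. $Owns(a,\alpha,t)$ means agent $a$ owns asset $\alpha$ at time $t$. $Asset_\exists$ (time-dependent) is the set of currently existing assets. Ownership laws, required at every time: (L1) every $\alpha\in Asset_\exists$ has some owner; (L2) every $\alpha \in Asset_\exists$ has at most one owner; (L3) no $\alpha \in Asset\setminus Asset_\exists$ has an owner. A token function $\tau$ is an injection from $\{(a,\alpha,t) : Owns(a,\alpha,t)\}$ to bitstrings, with $\tau$ and its inverse common knowledge, so $K_x\,\tau(Owns(a,\alpha,t)) \iff K_x\,Owns(a,\alpha,t)$. $K_x\,\phi$ means agent $x$ knows $\phi$ (only truths are known); $PC(A,\phi) :\iff \forall x,y\in A,\ K_xK_y\,\phi$. Specification $\mathcal N$: $PC(Agent,\tau(Owns(a,\alpha,t)))$ with $Owns$ satisfying (L1)–(L3). Implementation: a blockchain $bc$ maintained by a network $Net$ of nodes each holding a copy of $bc$, with $PC(Net,$ "all nodes are honest and run the $bc$ software"$)$. Each block contains one transaction; appending takes one time unit. $Mint(orig,\alpha,t+1)$: if no agent owns $\alpha$ at any time $u\le t$, append a block containing $\tau(Owns(orig,\alpha,t+1))$;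 otherwise no change. Standard transaction $Tx(b,s,c,t)$ is appended only if buyer $b$'s balance (received minus paid over $bc$) is at least $c$. $TxO(old,new,\alpha,c,t)$: if $Owns(old,\alpha,t)$ and $balance(new)\ge c$, append a block with $\tau(Owns(new,\alpha,t+1))$ concatenated with $Tx(new,old,c,t+1)$. $TxOr$ has the same precondition and ownership token as $TxO$, but its standard-transaction part is $Tx(new,old,c-\%c,t+1)$ concatenated with $Tx(new,orig,\%c,t+1)$, where $\%c$ is the royalty and $orig$ is the originator of $\alpha$, identified as the first owner in the chain-ordered list of agents $a$ with $\tau(Owns(a,\alpha))$ in $bc$. Existing assets are those minted so far. Each agent $x$ uses an e-wallet connected to a node $v_x\in Net$; all agents are honest, and $v_x$ communicates to $x$ the fact $PC(Net,\phi)$ and to $Net$ the fact $K_x\,\phi$, $\phi$ being the ownership information. *)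

theory Defs
  imports Complex_Main
begin

type_synonym bits = "bool list"

text \<open>A standard transaction Tx(b,s,c,t): buyer b pays amount c to seller s at time t.\<close>
datatype 'ag tx = Tx 'ag 'ag real nat

text \<open>Blocks (one transaction per block): a mint block carrying an ownership token,
  a standard-transaction block, or an ownership-transfer block carrying an ownership
  token concatenated with standard transactions.\<close>
datatype 'ag block =
    MintB bits
  | StdB "'ag tx"
  | OwnB bits "'ag tx list"

text \<open>Requests issued at a time step: Mint(orig,alpha), Tx(b,s,c), TxOr(old,new,alpha,c).\<close>
datatype ('ag, 'as) request =
    RMint 'ag 'as
  | RTx 'ag 'ag real
  | RTxOr 'ag 'ag 'as real

fun block_token :: "'ag block \<Rightarrow> bits list" where
  "block_token (MintB bs) = [bs]"
| "block_token (StdB _) = []"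
| "block_token (OwnB bs _) = [bs]"

fun block_txs :: "'ag block \<Rightarrow> 'ag tx list" where
  "block_txs (MintB _) = []"
| "block_txs (StdB t) = [t]"
| "block_txs (OwnB _ ts) = ts"

definition records :: "('ag \<times> 'as \<times> nat \<Rightarrow> bits) \<Rightarrow> 'ag block list \<Rightarrow> ('ag \<times> 'as \<times> nat) list" where
  "records \<tau> bc = map (inv \<tau>) (concat (map block_token bc))"

definition owner_list :: "('ag \<times> 'as \<times> nat \<Rightarrow> bits) \<Rightarrow> 'ag block list \<Rightarrow> 'as \<Rightarrow> 'ag list" where
  "owner_list \<tau> bc \<alpha> = map fst (filter (\<lambda>(a, \<beta>, u). \<beta> = \<alpha>) (records \<tau> bc))"

definition chain_owns :: "('ag \<times> 'as \<times> nat \<Rightarrow> bits) \<Rightarrow> 'ag block list \<Rightarrow> 'ag \<Rightarrow> 'as \<Rightarrow> bool" where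
  "chain_owns \<tau> bc a \<alpha> \<longleftrightarrow> owner_list \<tau> bc \<alpha> \<noteq> [] \<and> last (owner_list \<tau> bc \<alpha>) = a"

definition orig :: "('ag \<times> 'as \<times> nat \<Rightarrow> bits) \<Rightarrow> 'ag block list \<Rightarrow> 'as \<Rightarrow> 'ag" where
  "orig \<tau> bc \<alpha> = hd (owner_list \<tau> bc \<alpha>)"

definition balance :: "'ag block list \<Rightarrow> 'ag \<Rightarrow> real" where
  "balance bc x = sum_list (map (\<lambda>t. case t of Tx b s c u \<Rightarrow>
       (if s = x then c else 0) - (if b = x then c else 0)) (concat (map block_txs bc)))"

definition minted :: "('ag \<times> 'as \<times> nat \<Rightarrow> bits) \<Rightarrow> 'ag block list \<Rightarrow> 'as set" where
  "minted \<tau> bc = {\<alpha>. \<exists>bs a u. MintB bs \<in> set bc \<and> inv \<tau> bs = (a, \<alpha>, u)}"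

text \<open>One time step of the blockchain, with TxO replaced by the royalty-paying TxOr.
  roy c is the royalty %c paid to the originator.\<close>
fun step :: "('ag \<times> 'as \<times> nat \<Rightarrow> bits) \<Rightarrow> (real \<Rightarrow> real) \<Rightarrow> nat \<Rightarrow> 'ag block list
               \<Rightarrow> ('ag, 'as) request option \<Rightarrow> 'ag block list" where
  "step \<tau> roy t bc None = bc"
| "step \<tau> roy t bc (Some (RMint o' \<alpha>)) =
     (if owner_list \<tau> bc \<alpha> = [] then bc @ [MintB (\<tau> (o', \<alpha>, Suc t))] else bc)"
| "step \<tau> roy t bc (Some (RTx b s c)) =
     (if balance bc b \<ge> c then bc @ [StdB (Tx b s c (Suc t))] else bc)"
| "step \<tau> roy t bc (Some (RTxOr old new \<alpha> c)) =
     (if chain_owns \<tau> bc old \<alpha> \<and> balance bc new \<ge> c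
      then bc @ [OwnB (\<tau> (new, \<alpha>, Suc t))
                   [Tx new old (c - roy c) (Suc t), Tx new (orig \<tau> bc \<alpha>) (roy c) (Suc t)]]
      else bc)"

primrec bc_run :: "('ag \<times> 'as \<times> nat \<Rightarrow> bits) \<Rightarrow> (real \<Rightarrow> real) \<Rightarrow> (nat \<Rightarrow> ('ag, 'as) request option)
                     \<Rightarrow> nat \<Rightarrow> 'ag block list" where
  "bc_run \<tau> roy ops 0 = []"
| "bc_run \<tau> roy ops (Suc t) = step \<tau> roy t (bc_run \<tau> roy ops t) (ops t)"

definition Owns :: "('ag \<times> 'as \<times> nat \<Rightarrow> bits) \<Rightarrow> (real \<Rightarrow> real) \<Rightarrow> (nat \<Rightarrow> ('ag, 'as) request option)
                     \<Rightarrow> 'ag \<Rightarrow> 'as \<Rightarrow> nat \<Rightarrow> bool" where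
  "Owns \<tau> roy ops a \<alpha> t \<longleftrightarrow> chain_owns \<tau> (bc_run \<tau> roy ops t) a \<alpha>"

definition Asset_ex :: "('ag \<times> 'as \<times> nat \<Rightarrow> bits) \<Rightarrow> (real \<Rightarrow> real) \<Rightarrow> (nat \<Rightarrow> ('ag, 'as) request option)
                     \<Rightarrow> nat \<Rightarrow> 'as set" where
  "Asset_ex \<tau> roy ops t = minted \<tau> (bc_run \<tau> roy ops t)"

definition ownership_laws :: "('ag \<Rightarrow> 'as \<Rightarrow> nat \<Rightarrow> bool) \<Rightarrow> (nat \<Rightarrow> 'as set) \<Rightarrow> bool" where
  "ownership_laws own ex \<longleftrightarrow> (\<forall>t.
      (\<forall>\<alpha>\<in>ex t. \<exists>a. own a \<alpha> t) \<and>
      (\<forall>\<alpha>\<in>ex t. \<forall>a b. own a \<alpha> t \<and> own b \<alpha> t \<longrightarrow> a = b) \<and>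
      (\<forall>\<alpha>. \<alpha> \<notin> ex t \<longrightarrow> (\<forall>a. \<not> own a \<alpha> t)))"

definition Kn :: "('w \<Rightarrow> 'w \<Rightarrow> bool) \<Rightarrow> 'w set \<Rightarrow> 'w set" where
  "Kn R P = {w. \<forall>w'. R w w' \<longrightarrow> w' \<in> P}"

definition PC :: "('i \<Rightarrow> 'w \<Rightarrow> 'w \<Rightarrow> bool) \<Rightarrow> 'i set \<Rightarrow> 'w set \<Rightarrow> 'w set" where
  "PC R A P = {w. \<forall>x\<in>A. \<forall>y\<in>A. w \<in> Kn (R x) (Kn (R y) P)}"

definition tok_fact :: "('ag \<times> 'as \<times> nat \<Rightarrow> bits) \<Rightarrow> (real \<Rightarrow> real) \<Rightarrow> ('w \<Rightarrow> nat \<Rightarrow> ('ag, 'as) request option)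
                     \<Rightarrow> bits \<Rightarrow> 'w set" where
  "tok_fact \<tau> roy ops bs = {w. case inv \<tau> bs of (a, \<alpha>, t) \<Rightarrow> Owns \<tau> roy (ops w) a \<alpha> t}"

end

theory Submission
  imports Defs
begin

text \<open>The ownership laws rest on one invariant of the run: every asset for which the chain
  records an ownership token has been minted. A royalty-paying transfer adds a token for
  \<open>\<alpha>\<close> only if \<open>\<alpha>\<close> already has an owner on the chain, so the extra standard transaction
  paying the originator does not affect ownership at all. For the epistemic part, honest
  nodes that know their own copy of the chain agree on the whole run, so the network has
  pairwise common knowledge of every recorded ownership; the wallets pass this on to every
  agent, and since it is veridical it stays true in every world an agent considers possible.\<close>

definition recorded_assets :: "('ag \<times> 'as \<times> nat \<Rightarrow> bits) \<Rightarrow> 'ag block list \<Rightarrow> 'as set" where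
  "recorded_assets \<tau> bc = fst ` snd ` set (records \<tau> bc)"

lemma recorded_assets_snoc:
  "recorded_assets \<tau> (bc @ [b]) = recorded_assets \<tau> bc \<union> fst ` snd ` inv \<tau> ` set (block_token b)"
  by (simp add: recorded_assets_def records_def image_Un)

lemma owner_list_eq_Nil_iff: "owner_list \<tau> bc \<alpha> = [] \<longleftrightarrow> \<alpha> \<notin> recorded_assets \<tau> bc"
  by (force simp: owner_list_def recorded_assets_def filter_empty_conv)

lemma minted_subset_recorded_assets: "minted \<tau> bc \<subseteq> recorded_assets \<tau> bc"
  by (force simp: minted_def recorded_assets_def records_def)

lemma step_extends: "\<exists>bs. step \<tau> roy t bc r = bc @ bs"
  by (cases "(\<tau>, roy, t, bc, r)" rule: step.cases) auto

lemma minted_step_mono: "minted \<tau> bc \<subseteq> minted \<tau> (step \<tau> roy t bc r)"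
  using step_extends[of \<tau> roy t bc r] by (auto simp: minted_def)

lemma recorded_assets_step:
  assumes "inj \<tau>"
  shows "recorded_assets \<tau> (step \<tau> roy t bc r)
           \<subseteq> recorded_assets \<tau> bc \<union> minted \<tau> (step \<tau> roy t bc r)"
proof (cases r)
  case (Some q)
  then show ?thesis
  proof (cases q)
    case (RMint o' \<alpha>)
    have "\<alpha> \<in> minted \<tau> (bc @ [MintB (\<tau> (o', \<alpha>, Suc t))])"
      using assms by (force simp: minted_def)
    with Some RMint show ?thesis
      using assms by (simp add: recorded_assets_snoc)
  next
    case (RTx b s c)
    with Some show ?thesis by (simp add: recorded_assets_snoc)
  next
    case (RTxOr old new \<alpha> c)
    have "\<alpha> \<in> recorded_assets \<tau> bc" if "chain_owns \<tau> bc old \<alpha>"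
      using that by (simp add: chain_owns_def owner_list_eq_Nil_iff)
    with Some RTxOr show ?thesis
      using assms by (simp add: recorded_assets_snoc)
  qed
qed simp

lemma recorded_assets_bc_run:
  assumes "inj \<tau>"
  shows "recorded_assets \<tau> (bc_run \<tau> roy ops t) = minted \<tau> (bc_run \<tau> roy ops t)"
proof (induction t)
  case 0
  show ?case by (simp add: recorded_assets_def records_def minted_def)
next
  case (Suc t)
  let ?bc = "bc_run \<tau> roy ops t"
  have "recorded_assets \<tau> (step \<tau> roy t ?bc (ops t))
          \<subseteq> recorded_assets \<tau> ?bc \<union> minted \<tau> (step \<tau> roy t ?bc (ops t))"
    by (rule recorded_assets_step[OF assms])
  also have "\<dots> = minted \<tau> ?bc \<union> minted \<tau> (step \<tau> roy t ?bc (ops t))"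
    by (simp only: Suc.IH)
  also have "\<dots> = minted \<tau> (step \<tau> roy t ?bc (ops t))"
    using minted_step_mono by (rule Un_absorb1)
  finally show ?case
    using subset_antisym[OF _ minted_subset_recorded_assets] by simp
qed

theorem ownership_laws_Owns:
  assumes "inj \<tau>"
  shows "ownership_laws (Owns \<tau> roy ops) (Asset_ex \<tau> roy ops)"
proof -
  have existing: "\<alpha> \<in> Asset_ex \<tau> roy ops t \<longleftrightarrow> owner_list \<tau> (bc_run \<tau> roy ops t) \<alpha> \<noteq> []"
    for \<alpha> t
    using recorded_assets_bc_run[OF assms] by (simp add: Asset_ex_def owner_list_eq_Nil_iff)
  show ?thesis
    by (auto simp: ownership_laws_def Owns_def chain_owns_def existing)
qed

lemma PC_mono: "P \<subseteq> Q \<Longrightarrow> PC R A P \<subseteq> PC R A Q"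
  by (auto simp: PC_def Kn_def)

lemma PC_veridical:
  assumes "\<forall>x w. R x w w" and "x \<in> A"
  shows "PC R A P \<subseteq> P"
  using assms unfolding PC_def Kn_def by blast

lemma PC_if_Kn_stable:
  assumes "Q \<subseteq> P" and "\<forall>x\<in>A. Q \<subseteq> Kn (R x) Q"
  shows "Q \<subseteq> PC R A P"
  using assms unfolding PC_def Kn_def by blast

lemma PC_agreement:
  assumes veridical: "\<forall>n w. R n w w"
    and knows_copy: "\<forall>n\<in>A. \<forall>w w'. R n w w' \<longrightarrow> c w' n = c w n"
    and common: "w0 \<in> PC R A {w. \<forall>n\<in>A. c w n = f w}"
  shows "w0 \<in> PC R A {w. f w = f w0}"
  unfolding PC_def Kn_def
proof (intro CollectI ballI allI impI)
  fix n m w' w''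
  assume n: "n \<in> A" and m: "m \<in> A" and step1: "R n w0 w'" and step2: "R m w' w''"
  have copies: "\<forall>k\<in>A. c w k = f w" if "R n w0 w1" "R m w1 w" for w1 w
    using common n m that by (simp add: PC_def Kn_def)
  have "f w'' = c w'' m" using copies[OF step1 step2] m by simp
  also have "\<dots> = c w' m" using knows_copy m step2 by blast
  also have "\<dots> = f w'" using copies[OF step1 veridical[rule_format]] m by simp
  also have "\<dots> = c w' n" using copies[OF step1 veridical[rule_format]] n by simp
  also have "\<dots> = c w0 n" using knows_copy n step1 by blast
  also have "\<dots> = f w0" using copies[OF veridical[rule_format] veridical[rule_format]] n by simp
  finally show "f w'' = f w0" .
qed

lemma tok_fact_tau:
  assumes "inj \<tau>"
  shows "tok_fact \<tau> roy ops (\<tau> (a, \<alpha>, t)) = {w. Owns \<tau> roy (ops w) a \<alpha> t}"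
  using assms by (simp add: tok_fact_def)

theorem theorem2:
  fixes \<tau> :: "'ag \<times> 'as \<times> nat \<Rightarrow> bool list"
    and roy :: "real \<Rightarrow> real"
    and ops :: "'w \<Rightarrow> nat \<Rightarrow> ('ag, 'as) request option"
    and RA :: "'ag \<Rightarrow> 'w \<Rightarrow> 'w \<Rightarrow> bool"
    and RN :: "'nd \<Rightarrow> 'w \<Rightarrow> 'w \<Rightarrow> bool"
    and Net :: "'nd set"
    and v :: "'ag \<Rightarrow> 'nd"
    and copy :: "'w \<Rightarrow> 'nd \<Rightarrow> nat \<Rightarrow> 'ag block list"
    and w0 :: 'w
  assumes tau_inj: "inj \<tau>"
    and veridical_agents: "\<forall>x w. RA x w w"
    and veridical_nodes: "\<forall>n w. RN n w w"
    and nodes_hold_copy: "\<forall>n\<in>Net. \<forall>w w'. RN n w w' \<longrightarrow> copy w' n = copy w n"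
    and honest: "w0 \<in> PC RN Net {w. \<forall>n\<in>Net. copy w n = bc_run \<tau> roy (ops w)}"
    and wallet_node: "\<forall>x. v x \<in> Net"
    and wallet_comm: "\<forall>w x a \<alpha> t.
        (w \<in> PC RN Net (tok_fact \<tau> roy ops (\<tau> (a, \<alpha>, t)))
           \<longrightarrow> w \<in> Kn (RA x) (PC RN Net (tok_fact \<tau> roy ops (\<tau> (a, \<alpha>, t))))) \<and>
        (w \<in> Kn (RA x) (tok_fact \<tau> roy ops (\<tau> (a, \<alpha>, t)))
           \<longrightarrow> w \<in> PC RN Net (Kn (RA x) (tok_fact \<tau> roy ops (\<tau> (a, \<alpha>, t)))))"
  shows "ownership_laws (Owns \<tau> roy (ops w0)) (Asset_ex \<tau> roy (ops w0)) \<and>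
         (\<forall>a \<alpha> t. Owns \<tau> roy (ops w0) a \<alpha> t \<longrightarrow>
            w0 \<in> PC RA UNIV (tok_fact \<tau> roy ops (\<tau> (a, \<alpha>, t))))"
proof (intro conjI allI impI)
  show "ownership_laws (Owns \<tau> roy (ops w0)) (Asset_ex \<tau> roy (ops w0))"
    using ownership_laws_Owns[OF tau_inj] .
next
  fix a \<alpha> t
  assume owns: "Owns \<tau> roy (ops w0) a \<alpha> t"
  let ?P = "tok_fact \<tau> roy ops (\<tau> (a, \<alpha>, t))"
  have "w0 \<in> PC RN Net {w. bc_run \<tau> roy (ops w) = bc_run \<tau> roy (ops w0)}"
    using PC_agreement[OF veridical_nodes nodes_hold_copy honest] .
  moreover have "{w. bc_run \<tau> roy (ops w) = bc_run \<tau> roy (ops w0)} \<subseteq> ?P"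
    using owns by (auto simp: tok_fact_tau[OF tau_inj] Owns_def)
  ultimately have network: "w0 \<in> PC RN Net ?P"
    using PC_mono by blast
  have "PC RN Net ?P \<subseteq> PC RA UNIV ?P"
  proof (rule PC_if_Kn_stable)
    show "PC RN Net ?P \<subseteq> ?P"
      using PC_veridical[of RN "v a" Net] veridical_nodes wallet_node by blast
    show "\<forall>x\<in>UNIV. PC RN Net ?P \<subseteq> Kn (RA x) (PC RN Net ?P)"
      using wallet_comm by blast
  qed
  with network show "w0 \<in> PC RA UNIV ?P" by blast
qed

end
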